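(* Let $(M,d)$ be a complete pointed metric space, $k\in\mathbb N$ and $\lambda_1,\dots,\lambda_k\in\mathbb R$. Then the set $\sum_{i=1}^k\lambda_i\delta(M):=\{\sum_{i=1}^k\lambda_i\delta(x_i):x_1,\dots,x_k\in M\}$ is a norm-closed subset of $\mathcal F(M)$.
   Context: A pointed metric space is a metric space with a distinguished point $0$. $\mathrm{Lip}_0(M)$ denotes the real-valued Lipschitz functions on $M$ vanishing at $0$, normed by the Lipschitz constant. $\delta:M\to\mathrm{Lip}_0(M)^*$, $\delta(x)(\varphi)=\varphi(x)$; the Lipschitz-free space $\mathcal F(M)$ is the norm-closed linear span of $\delta(M)$ in $\mathrm{Lip}_0(M)^*$. *)

theory Defs
  imports "HOL-Analysis.Analysis"
begin

text \<open>Pointed metric space: the type 'a (a metric space) with base point z.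
  Lip_0(M): real Lipschitz functions vanishing at z.\<close>

definition Lip0 :: "'a::metric_space \<Rightarrow> ('a \<Rightarrow> real) set" where
  "Lip0 z = {f. (\<exists>C. lipschitz_on C UNIV f) \<and> f z = 0}"

definition Lip0_ball :: "'a::metric_space \<Rightarrow> ('a \<Rightarrow> real) set" where
  "Lip0_ball z = {f. lipschitz_on 1 UNIV f \<and> f z = 0}"

text \<open>Elements of the dual Lip_0(M)^*: bounded linear functionals on Lip0 z,
  normalised to be 0 outside Lip0 z (so that equality is extensional).\<close>
definition Lip0_dual :: "'a::metric_space \<Rightarrow> (('a \<Rightarrow> real) \<Rightarrow> real) set" where
  "Lip0_dual z = {\<phi>. (\<forall>f. f \<notin> Lip0 z \<longrightarrow> \<phi> f = 0)
     \<and> (\<forall>f\<in>Lip0 z. \<forall>g\<in>Lip0 z. \<phi> (\<lambda>x. f x + g x) = \<phi> f + \<phi> g)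
     \<and> (\<forall>c. \<forall>f\<in>Lip0 z. \<phi> (\<lambda>x. c * f x) = c * \<phi> f)
     \<and> (\<exists>K. \<forall>f\<in>Lip0_ball z. \<bar>\<phi> f\<bar> \<le> K)}"

definition dual_norm :: "'a::metric_space \<Rightarrow> (('a \<Rightarrow> real) \<Rightarrow> real) \<Rightarrow> real" where
  "dual_norm z \<phi> = (SUP f\<in>Lip0_ball z. \<bar>\<phi> f\<bar>)"

definition delta :: "'a::metric_space \<Rightarrow> 'a \<Rightarrow> ('a \<Rightarrow> real) \<Rightarrow> real" where
  "delta z x = (\<lambda>f. if f \<in> Lip0 z then f x else 0)"

definition delta_span :: "'a::metric_space \<Rightarrow> (('a \<Rightarrow> real) \<Rightarrow> real) set" where
  "delta_span z = {\<phi>. \<exists>(n::nat) (a::nat \<Rightarrow> real) (x::nat \<Rightarrow> 'a).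
      \<phi> = (\<lambda>f. \<Sum>i<n. a i * delta z (x i) f)}"

definition free_space :: "'a::metric_space \<Rightarrow> (('a \<Rightarrow> real) \<Rightarrow> real) set" where
  "free_space z = {\<phi>\<in>Lip0_dual z. \<forall>e>0. \<exists>\<psi>\<in>delta_span z.
      dual_norm z (\<lambda>f. \<phi> f - \<psi> f) < e}"

end

theory Submission
  imports Defs
begin

text \<open>
  Induction on the number of nonzero coefficients. Let \<open>\<phi>\<close> be a limit of sums
  \<open>\<Sum>\<lambda>\<^sub>i\<delta>(x\<^sub>i)\<close>. If along good approximants two points carrying nonzero
  coefficients come arbitrarily close, merging them gives approximants with one nonzero
  coefficient less. Otherwise these points stay \<open>\<delta>\<close>-separated; testing against a tent function
  of small radius around one of them shows that every point of a good approximant lies close to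
  some point of a fixed good approximant, so all points are totally bounded. By completeness a
  subsequence converges to some \<open>y\<close>, and since norm convergence in the dual implies pointwise
  convergence on Lipschitz functions, \<open>\<phi> = \<Sum>\<lambda>\<^sub>i\<delta>(y\<^sub>i)\<close>.
\<close>

definition delta_sum :: "'a::metric_space \<Rightarrow> nat \<Rightarrow> (nat \<Rightarrow> real) \<Rightarrow> (nat \<Rightarrow> 'a) \<Rightarrow> ('a \<Rightarrow> real) \<Rightarrow> real"
  where "delta_sum z k lam x = (\<lambda>f. \<Sum>i<k. lam i * delta z (x i) f)"

definition dual_dist :: "'a::metric_space \<Rightarrow> (('a \<Rightarrow> real) \<Rightarrow> real) \<Rightarrow> (('a \<Rightarrow> real) \<Rightarrow> real) \<Rightarrow> real"
  where "dual_dist z \<phi> \<psi> = dual_norm z (\<lambda>f. \<phi> f - \<psi> f)"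

definition approx_by_delta_sums :: "'a::metric_space \<Rightarrow> nat \<Rightarrow> (nat \<Rightarrow> real) \<Rightarrow> (('a \<Rightarrow> real) \<Rightarrow> real) \<Rightarrow> bool"
  where "approx_by_delta_sums z k lam \<phi> \<longleftrightarrow> (\<forall>e>0. \<exists>x. dual_dist z \<phi> (delta_sum z k lam x) < e)"

lemma Lip0_ball_imp_Lip0: "f \<in> Lip0_ball z \<Longrightarrow> f \<in> Lip0 z"
  unfolding Lip0_ball_def Lip0_def by auto

lemma zero_in_Lip0_ball: "(\<lambda>x. 0) \<in> Lip0_ball z"
  unfolding Lip0_ball_def by (auto simp: lipschitz_on_def)

lemma Lip0_add: "f \<in> Lip0 z \<Longrightarrow> g \<in> Lip0 z \<Longrightarrow> (\<lambda>x. f x + g x) \<in> Lip0 z"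
  unfolding Lip0_def by (auto intro: lipschitz_on_add)

lemma Lip0_cmult: "f \<in> Lip0 z \<Longrightarrow> (\<lambda>x. c * f x) \<in> Lip0 z"
  unfolding Lip0_def by (auto intro: lipschitz_on_cmult_real)

lemma Lip0_ball_abs_diff_le_dist:
  assumes "f \<in> Lip0_ball z" shows "\<bar>f p - f q\<bar> \<le> dist p q"
proof -
  have "lipschitz_on 1 UNIV f" using assms unfolding Lip0_ball_def by auto
  then show ?thesis using lipschitz_onD[of 1 UNIV f p q] by (simp add: dist_real_def)
qed

lemma Lip0_ball_abs_le_dist: "f \<in> Lip0_ball z \<Longrightarrow> \<bar>f p\<bar> \<le> dist p z"
  using Lip0_ball_abs_diff_le_dist[of f z p z] by (simp add: Lip0_ball_def)

lemma Lip0_dual_diff: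
  assumes "\<phi> \<in> Lip0_dual z" "\<psi> \<in> Lip0_dual z"
  shows "(\<lambda>f. \<phi> f - \<psi> f) \<in> Lip0_dual z"
proof -
  obtain K1 K2 where "\<forall>f\<in>Lip0_ball z. \<bar>\<phi> f\<bar> \<le> K1" "\<forall>f\<in>Lip0_ball z. \<bar>\<psi> f\<bar> \<le> K2"
    using assms unfolding Lip0_dual_def by blast
  then have "\<forall>f\<in>Lip0_ball z. \<bar>\<phi> f - \<psi> f\<bar> \<le> K1 + K2"
    by (auto intro: order_trans[OF abs_triangle_ineq4 add_mono])
  then show ?thesis using assms unfolding Lip0_dual_def by (auto simp: algebra_simps)
qed

lemma abs_le_dual_norm:
  assumes "\<psi> \<in> Lip0_dual z" "f \<in> Lip0_ball z"
  shows "\<bar>\<psi> f\<bar> \<le> dual_norm z \<psi>"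
proof -
  have "bdd_above ((\<lambda>f. \<bar>\<psi> f\<bar>) ` Lip0_ball z)"
    using assms(1) unfolding Lip0_dual_def bdd_above_def by blast
  then show ?thesis unfolding dual_norm_def using assms(2) by (rule cSUP_upper2) simp
qed

lemma dual_norm_nonneg: "\<psi> \<in> Lip0_dual z \<Longrightarrow> 0 \<le> dual_norm z \<psi>"
  using abs_le_dual_norm[OF _ zero_in_Lip0_ball] by (meson abs_ge_zero order_trans)

lemma dual_norm_le:
  assumes "\<And>f. f \<in> Lip0_ball z \<Longrightarrow> \<bar>\<psi> f\<bar> \<le> B"
  shows "dual_norm z \<psi> \<le> B"
  unfolding dual_norm_def using zero_in_Lip0_ball assms by (intro cSUP_least) auto

lemma abs_le_lipschitz_dual_norm:
  assumes "\<psi> \<in> Lip0_dual z" "f \<in> Lip0 z" "lipschitz_on C UNIV f"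
  shows "\<bar>\<psi> f\<bar> \<le> (C + 1) * dual_norm z \<psi>"
proof -
  have C: "C \<ge> 0" using assms(3) lipschitz_on_nonneg by blast
  define g where "g = (\<lambda>p. (1 / (C + 1)) * f p)"
  have "lipschitz_on (\<bar>1 / (C + 1)\<bar> * C) UNIV g"
    unfolding g_def by (rule lipschitz_on_cmult_real[OF assms(3)])
  moreover have "\<bar>1 / (C + 1)\<bar> * C \<le> 1" using C by (simp add: field_simps)
  ultimately have "lipschitz_on 1 UNIV g" using lipschitz_on_le by blast
  then have g: "g \<in> Lip0_ball z" using assms(2) unfolding g_def Lip0_def Lip0_ball_def by simp
  have "f = (\<lambda>p. (C + 1) * g p)" unfolding g_def using C by auto
  then have "\<psi> f = (C + 1) * \<psi> g"
    using assms(1) Lip0_ball_imp_Lip0[OF g] unfolding Lip0_dual_def by blast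
  then have "\<bar>\<psi> f\<bar> = (C + 1) * \<bar>\<psi> g\<bar>" using C by (simp add: abs_mult)
  also have "\<dots> \<le> (C + 1) * dual_norm z \<psi>"
    using abs_le_dual_norm[OF assms(1) g] C by (simp add: mult_left_mono)
  finally show ?thesis .
qed

lemma dual_dist_nonneg: "\<phi> \<in> Lip0_dual z \<Longrightarrow> \<psi> \<in> Lip0_dual z \<Longrightarrow> 0 \<le> dual_dist z \<phi> \<psi>"
  unfolding dual_dist_def by (intro dual_norm_nonneg Lip0_dual_diff)

lemma dual_dist_self: "dual_dist z \<phi> \<phi> = 0"
proof -
  have "Lip0_ball z \<noteq> {}" using zero_in_Lip0_ball by blast
  then show ?thesis unfolding dual_dist_def dual_norm_def by simp
qed

lemma abs_diff_le_dual_dist: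
  "\<phi> \<in> Lip0_dual z \<Longrightarrow> \<psi> \<in> Lip0_dual z \<Longrightarrow> f \<in> Lip0_ball z \<Longrightarrow> \<bar>\<phi> f - \<psi> f\<bar> \<le> dual_dist z \<phi> \<psi>"
  unfolding dual_dist_def using abs_le_dual_norm[OF Lip0_dual_diff] by fastforce

lemma Lip0_dual_eqI:
  assumes "\<phi> \<in> Lip0_dual z" "\<psi> \<in> Lip0_dual z" "\<And>f. f \<in> Lip0 z \<Longrightarrow> \<phi> f = \<psi> f"
  shows "\<phi> = \<psi>"
proof
  fix f show "\<phi> f = \<psi> f"
    using assms unfolding Lip0_dual_def by (cases "f \<in> Lip0 z") auto
qed

lemma delta_sum_apply: "f \<in> Lip0 z \<Longrightarrow> delta_sum z k lam x f = (\<Sum>i<k. lam i * f (x i))"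
  unfolding delta_sum_def delta_def by simp

lemma delta_sum_in_Lip0_dual: "delta_sum z k lam x \<in> Lip0_dual z"
proof -
  have "delta_sum z k lam x (\<lambda>p. f p + g p) = delta_sum z k lam x f + delta_sum z k lam x g"
    if "f \<in> Lip0 z" "g \<in> Lip0 z" for f g
    using that Lip0_add[OF that] by (simp add: delta_sum_apply sum.distrib distrib_left)
  moreover have "delta_sum z k lam x (\<lambda>p. c * f p) = c * delta_sum z k lam x f" if "f \<in> Lip0 z" for f c
    using that Lip0_cmult[OF that] by (simp add: delta_sum_apply sum_distrib_left algebra_simps)
  moreover have "\<bar>delta_sum z k lam x f\<bar> \<le> (\<Sum>i<k. \<bar>lam i\<bar> * dist (x i) z)" if "f \<in> Lip0_ball z" for f
  proof -
    have "\<bar>delta_sum z k lam x f\<bar> = \<bar>\<Sum>i<k. lam i * f (x i)\<bar>"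
      using that by (simp add: delta_sum_apply Lip0_ball_imp_Lip0)
    also have "\<dots> \<le> (\<Sum>i<k. \<bar>lam i\<bar> * dist (x i) z)"
      by (rule order_trans[OF sum_abs sum_mono])
        (simp add: abs_mult Lip0_ball_abs_le_dist[OF that] mult_left_mono)
    finally show ?thesis .
  qed
  moreover have "delta_sum z k lam x f = 0" if "f \<notin> Lip0 z" for f
    using that unfolding delta_sum_def delta_def by simp
  ultimately show ?thesis unfolding Lip0_dual_def by blast
qed

lemma delta_sum_in_free_space: "delta_sum z k lam x \<in> free_space z"
proof -
  have "delta_sum z k lam x \<in> delta_span z"
    unfolding delta_sum_def delta_span_def by blast
  then have "\<forall>e>0. \<exists>\<psi>\<in>delta_span z. dual_dist z (delta_sum z k lam x) \<psi> < e"
    by (intro allI impI bexI[of _ "delta_sum z k lam x"]) (simp_all add: dual_dist_self)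
  then show ?thesis
    using delta_sum_in_Lip0_dual unfolding free_space_def dual_dist_def by blast
qed

lemma delta_sum_cong:
  assumes "\<And>i. i < k \<Longrightarrow> lam i \<noteq> 0 \<Longrightarrow> x i = y i"
  shows "delta_sum z k lam x = delta_sum z k lam y"
proof -
  have "lam i * delta z (x i) f = lam i * delta z (y i) f" if "i < k" for i f
    using assms[OF that] by (cases "lam i = 0") auto
  then show ?thesis unfolding delta_sum_def by (intro ext sum.cong) auto
qed

lemma delta_sum_merge:
  assumes "i < k" "j < k" "i \<noteq> j"
  shows "delta_sum z k (lam(i := lam i + lam j, j := 0)) x f
       = delta_sum z k lam x f + lam j * (delta z (x i) f - delta z (x j) f)"
proof -
  let ?d = "\<lambda>l. delta z (x l) f"
  have "(lam(i := lam i + lam j, j := 0)) l * ?d l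
      = lam l * ?d l + ((if l = i then lam j * ?d i else 0) - (if l = j then lam j * ?d j else 0))" for l
    using assms(3) by (auto simp: algebra_simps)
  then have "delta_sum z k (lam(i := lam i + lam j, j := 0)) x f
      = delta_sum z k lam x f + ((\<Sum>l<k. if l = i then lam j * ?d i else 0)
          - (\<Sum>l<k. if l = j then lam j * ?d j else 0))"
    unfolding delta_sum_def by (simp add: sum.distrib sum_subtractf)
  also have "\<dots> = delta_sum z k lam x f + lam j * (?d i - ?d j)"
    using assms by (simp add: algebra_simps)
  finally show ?thesis .
qed

lemma delta_sum_merge_coincident:
  assumes "i < k" "j < k" "i \<noteq> j" "x j = x i"
  shows "delta_sum z k (lam(i := lam i + lam j, j := 0)) x = delta_sum z k lam x"
  by (rule ext) (simp add: delta_sum_merge[OF assms(1-3)] assms(4))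

lemma approx_by_delta_sums_merge:
  assumes \<phi>: "\<phi> \<in> Lip0_dual z" and ij: "i < k" "j < k" "i \<noteq> j"
    and close: "\<forall>e>0. \<exists>x. dual_dist z \<phi> (delta_sum z k lam x) < e \<and> dist (x i) (x j) < e"
  shows "approx_by_delta_sums z k (lam(i := lam i + lam j, j := 0)) \<phi>"
  unfolding approx_by_delta_sums_def
proof (intro allI impI)
  fix e :: real assume "e > 0"
  define e' where "e' = e / (\<bar>lam j\<bar> + 2)"
  have "e' > 0" using \<open>e > 0\<close> by (simp add: e'_def add_pos_nonneg)
  then obtain x where x: "dual_dist z \<phi> (delta_sum z k lam x) < e'" "dist (x i) (x j) < e'"
    using close by blast
  have "dual_dist z \<phi> (delta_sum z k (lam(i := lam i + lam j, j := 0)) x) \<le> e' + \<bar>lam j\<bar> * e'"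
    unfolding dual_dist_def
  proof (rule dual_norm_le)
    fix f assume f: "f \<in> Lip0_ball z"
    have "\<bar>\<phi> f - delta_sum z k lam x f\<bar> \<le> e'"
      using abs_diff_le_dual_dist[OF \<phi> delta_sum_in_Lip0_dual[of z k lam x] f] x(1) by linarith
    moreover have "\<bar>f (x i) - f (x j)\<bar> \<le> e'"
      using Lip0_ball_abs_diff_le_dist[OF f, of "x i" "x j"] x(2) by linarith
    then have "\<bar>lam j * (delta z (x i) f - delta z (x j) f)\<bar> \<le> \<bar>lam j\<bar> * e'"
      using Lip0_ball_imp_Lip0[OF f] by (simp add: delta_def abs_mult mult_left_mono)
    ultimately show "\<bar>\<phi> f - delta_sum z k (lam(i := lam i + lam j, j := 0)) x f\<bar> \<le> e' + \<bar>lam j\<bar> * e'"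
      unfolding delta_sum_merge[OF ij] by linarith
  qed
  also have "\<dots> < (\<bar>lam j\<bar> + 2) * e'"
    using \<open>e' > 0\<close> by (simp add: algebra_simps)
  also have "\<dots> = e"
    by (simp add: e'_def add_pos_nonneg)
  finally show "\<exists>x. dual_dist z \<phi> (delta_sum z k (lam(i := lam i + lam j, j := 0)) x) < e" by blast
qed

lemma mergeable_or_separated:
  obtains (mergeable) i j where "i < k" "j < k" "i \<noteq> j" "lam i \<noteq> 0" "lam j \<noteq> 0"
      "\<forall>e>0. \<exists>x. dual_dist z \<phi> (delta_sum z k lam x) < e \<and> dist (x i) (x j) < e"
  | (separated) \<delta> where "\<delta> > 0"
      "\<And>x i j. dual_dist z \<phi> (delta_sum z k lam x) < \<delta> \<Longrightarrow> i < k \<Longrightarrow> j < k \<Longrightarrow> i \<noteq> j \<Longrightarrow>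
        lam i \<noteq> 0 \<Longrightarrow> lam j \<noteq> 0 \<Longrightarrow> \<delta> \<le> dist (x i) (x j)"
proof (cases "\<exists>i j. i < k \<and> j < k \<and> i \<noteq> j \<and> lam i \<noteq> 0 \<and> lam j \<noteq> 0 \<and>
    (\<forall>e>0. \<exists>x. dual_dist z \<phi> (delta_sum z k lam x) < e \<and> dist (x i) (x j) < e)")
  case True
  then show ?thesis using mergeable by blast
next
  case False
  define P where "P = {(i, j). i < k \<and> j < k \<and> i \<noteq> j \<and> lam i \<noteq> 0 \<and> lam j \<noteq> 0}"
  have "finite P"
    by (rule finite_subset[of _ "{..<k} \<times> {..<k}"]) (auto simp: P_def)
  moreover have "\<forall>\<^sub>F \<delta> in at_right 0. \<forall>x. dual_dist z \<phi> (delta_sum z k lam x) < \<delta> \<longrightarrow>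
      \<delta> \<le> dist (x (fst p)) (x (snd p))" if "p \<in> P" for p
  proof -
    obtain i j where p: "p = (i, j)" "i < k" "j < k" "i \<noteq> j" "lam i \<noteq> 0" "lam j \<noteq> 0"
      using \<open>p \<in> P\<close> unfolding P_def by auto
    then have "\<not> (\<forall>e>0. \<exists>x. dual_dist z \<phi> (delta_sum z k lam x) < e \<and> dist (x i) (x j) < e)"
      using False by blast
    then obtain e where e: "e > 0" "\<forall>x. \<not> (dual_dist z \<phi> (delta_sum z k lam x) < e \<and> dist (x i) (x j) < e)"
      by blast
    have "\<forall>x. dual_dist z \<phi> (delta_sum z k lam x) < \<delta> \<longrightarrow> \<delta> \<le> dist (x i) (x j)" if "\<delta> < e" for \<delta>
    proof (intro allI impI)
      fix x assume "dual_dist z \<phi> (delta_sum z k lam x) < \<delta>"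
      then have "\<not> dist (x i) (x j) < e" using e(2) that by force
      then show "\<delta> \<le> dist (x i) (x j)" using that by simp
    qed
    then show ?thesis
      unfolding eventually_at_right_field p(1) using \<open>e > 0\<close> by auto
  qed
  ultimately have "\<forall>\<^sub>F \<delta> in at_right 0. \<forall>p\<in>P. \<forall>x. dual_dist z \<phi> (delta_sum z k lam x) < \<delta> \<longrightarrow>
      \<delta> \<le> dist (x (fst p)) (x (snd p))"
    by (simp add: eventually_ball_finite_distrib)
  then obtain b where "b > 0" and b: "\<And>\<delta>. 0 < \<delta> \<Longrightarrow> \<delta> < b \<Longrightarrow> \<forall>p\<in>P. \<forall>x.
      dual_dist z \<phi> (delta_sum z k lam x) < \<delta> \<longrightarrow> \<delta> \<le> dist (x (fst p)) (x (snd p))"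
    unfolding eventually_at_right_field by auto
  show ?thesis
  proof (rule separated[of "b / 2"])
    fix x i j assume "dual_dist z \<phi> (delta_sum z k lam x) < b / 2" "i < k" "j < k" "i \<noteq> j"
      "lam i \<noteq> 0" "lam j \<noteq> 0"
    then show "b / 2 \<le> dist (x i) (x j)"
      using b[of "b / 2"] \<open>b > 0\<close> unfolding P_def by auto
  qed (use \<open>b > 0\<close> in simp)
qed

lemma isolated_coefficient_le_dual_dist:
  assumes \<phi>: "\<phi> \<in> Lip0_dual z" and "c < k" "r > 0"
    and isolated: "\<And>i. i < k \<Longrightarrow> i \<noteq> c \<Longrightarrow> lam i \<noteq> 0 \<Longrightarrow> r \<le> dist (x i) (x c)"
    and far: "\<And>j. j < k \<Longrightarrow> r \<le> dist (x' j) (x c)"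
  shows "\<bar>lam c\<bar> * r \<le> dual_dist z \<phi> (delta_sum z k lam x) + dual_dist z \<phi> (delta_sum z k lam x')"
proof -
  \<comment> \<open>a tent of height r at x c, shifted to vanish at the base point: it sees only x c\<close>
  define g where "g = (\<lambda>p. max 0 (r - dist p (x c)))"
  define f where "f = (\<lambda>p. g p - g z)"
  have "lipschitz_on 1 UNIV g"
  proof (rule lipschitz_onI)
    fix p q :: 'a
    have "\<bar>dist p (x c) - dist q (x c)\<bar> \<le> dist p q"
      using abs_dist_diff_le[of p "x c" q] by (simp add: dist_commute)
    then show "dist (g p) (g q) \<le> 1 * dist p q" unfolding g_def dist_real_def by linarith
  qed simp
  then have "lipschitz_on (1 + 0) UNIV f"
    unfolding f_def diff_conv_add_uminus by (intro lipschitz_on_add lipschitz_on_constant)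
  then have f: "f \<in> Lip0_ball z" unfolding Lip0_ball_def f_def by simp
  have eval: "delta_sum z k lam y f = (\<Sum>i<k. lam i * g (y i)) - (\<Sum>i<k. lam i) * g z" for y
    unfolding delta_sum_apply[OF Lip0_ball_imp_Lip0[OF f]]
    by (simp add: f_def algebra_simps sum_subtractf sum_distrib_left)
  have g0: "g p = 0" if "r \<le> dist p (x c)" for p
    using that by (simp add: g_def)
  have "(\<Sum>i<k. lam i * g (x i)) = lam c * g (x c) + (\<Sum>i\<in>{..<k} - {c}. lam i * g (x i))"
    using \<open>c < k\<close> by (simp add: sum.remove)
  also have "(\<Sum>i\<in>{..<k} - {c}. lam i * g (x i)) = 0"
  proof (intro sum.neutral ballI)
    fix i assume "i \<in> {..<k} - {c}"
    then show "lam i * g (x i) = 0" using isolated[of i] g0 by (cases "lam i = 0") auto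
  qed
  finally have "(\<Sum>i<k. lam i * g (x i)) = lam c * r"
    using \<open>r > 0\<close> by (simp add: g_def)
  moreover have "(\<Sum>i<k. lam i * g (x' i)) = 0"
    using far g0 by (intro sum.neutral) auto
  ultimately have "\<bar>lam c\<bar> * r = \<bar>delta_sum z k lam x f - delta_sum z k lam x' f\<bar>"
    using \<open>r > 0\<close> by (simp add: eval abs_mult)
  moreover have "\<bar>\<phi> f - delta_sum z k lam x f\<bar> \<le> dual_dist z \<phi> (delta_sum z k lam x)"
    and "\<bar>\<phi> f - delta_sum z k lam x' f\<bar> \<le> dual_dist z \<phi> (delta_sum z k lam x')"
    by (rule abs_diff_le_dual_dist[OF \<phi> delta_sum_in_Lip0_dual f])+
  ultimately show ?thesis by linarith
qed

lemma separated_approximants_finite_cover: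
  assumes \<phi>: "\<phi> \<in> Lip0_dual z" and "\<delta> > 0"
    and separated: "\<And>x i j. dual_dist z \<phi> (delta_sum z k lam x) < \<delta> \<Longrightarrow> i < k \<Longrightarrow> j < k \<Longrightarrow>
      i \<noteq> j \<Longrightarrow> lam i \<noteq> 0 \<Longrightarrow> lam j \<noteq> 0 \<Longrightarrow> \<delta> \<le> dist (x i) (x j)"
    and X: "(\<lambda>n. dual_dist z \<phi> (delta_sum z k lam (X n))) \<longlonglongrightarrow> 0"
    and "\<epsilon> > 0"
  shows "\<exists>F. finite F \<and> {X n c |n c. c < k \<and> lam c \<noteq> 0} \<subseteq> (\<Union>p\<in>F. ball p \<epsilon>)"
proof -
  define r where "r = min \<epsilon> \<delta>"
  define m where "m = Min (insert 1 {\<bar>lam c\<bar> |c. c < k \<and> lam c \<noteq> 0})"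
  have "r > 0" using \<open>\<epsilon> > 0\<close> \<open>\<delta> > 0\<close> by (simp add: r_def)
  have "m > 0" unfolding m_def by (subst Min_gr_iff) auto
  have m: "m \<le> \<bar>lam c\<bar>" if "c < k" "lam c \<noteq> 0" for c
    unfolding m_def using that by (intro Min_le) auto
  define \<eta> where "\<eta> = min \<delta> (m * r / 2)"
  have "\<eta> > 0" using \<open>\<delta> > 0\<close> \<open>m > 0\<close> \<open>r > 0\<close> by (simp add: \<eta>_def)
  then obtain N where N: "\<And>n. n \<ge> N \<Longrightarrow> dual_dist z \<phi> (delta_sum z k lam (X n)) < \<eta>"
    using order_tendstoD(2)[OF X] by (auto simp: eventually_sequentially)
  define F where "F = (\<lambda>(n, c). X n c) ` ({..N} \<times> {..<k})"
  have "X n c \<in> (\<Union>p\<in>F. ball p \<epsilon>)" if "c < k" "lam c \<noteq> 0" for n c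
  proof (cases "n \<le> N")
    case True
    then have "X n c \<in> F" unfolding F_def using \<open>c < k\<close> by (intro image_eqI[of _ _ "(n, c)"]) auto
    then show ?thesis using \<open>\<epsilon> > 0\<close> by (intro UN_I) auto
  next
    case False
    have approx: "dual_dist z \<phi> (delta_sum z k lam (X n)) < \<eta>" "dual_dist z \<phi> (delta_sum z k lam (X N)) < \<eta>"
      using N False by simp_all
    show ?thesis
    proof (rule ccontr)
      \<comment> \<open>otherwise a tent of radius r at X n c separates the approximants X n and X N\<close>
      assume uncovered: "X n c \<notin> (\<Union>p\<in>F. ball p \<epsilon>)"
      have "r \<le> dist (X n i) (X n c)" if "i < k" "i \<noteq> c" "lam i \<noteq> 0" for i
      proof -
        have "dual_dist z \<phi> (delta_sum z k lam (X n)) < \<delta>"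
          using approx(1) by (simp add: \<eta>_def)
        from separated[OF this that(1) \<open>c < k\<close> that(2,3) \<open>lam c \<noteq> 0\<close>]
        show ?thesis by (simp add: r_def)
      qed
      moreover have "r \<le> dist (X N j) (X n c)" if "j < k" for j
      proof -
        have "X N j \<in> F" unfolding F_def using that by (intro image_eqI[of _ _ "(N, j)"]) auto
        then have "X n c \<notin> ball (X N j) \<epsilon>" using uncovered by blast
        then show ?thesis by (simp add: r_def)
      qed
      ultimately have "\<bar>lam c\<bar> * r \<le> dual_dist z \<phi> (delta_sum z k lam (X n))
          + dual_dist z \<phi> (delta_sum z k lam (X N))"
        by (rule isolated_coefficient_le_dual_dist[OF \<phi> \<open>c < k\<close> \<open>r > 0\<close>, where x = "X n" and x' = "X N"])
      also have "\<dots> < m * r"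
        using approx unfolding \<eta>_def by linarith
      finally show False
        using m[OF that] \<open>r > 0\<close> by (simp add: mult_right_mono not_less[symmetric])
    qed
  qed
  then show ?thesis by (intro exI[of _ F]) (auto simp: F_def)
qed

lemma compact_closure_if_finite_ball_covers:
  fixes T :: "'a::complete_space set"
  assumes "\<And>e. e > 0 \<Longrightarrow> \<exists>F. finite F \<and> T \<subseteq> (\<Union>p\<in>F. ball p e)"
  shows "compact (closure T)"
  unfolding compact_eq_totally_bounded
proof
  show "complete (closure T)" by (simp add: complete_eq_closed)
  show "\<forall>e>0. \<exists>F. finite F \<and> closure T \<subseteq> (\<Union>p\<in>F. ball p e)"
  proof (intro allI impI)
    fix e :: real assume "e > 0"
    then obtain F where F: "finite F" "T \<subseteq> (\<Union>p\<in>F. ball p (e / 2))"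
      using assms[of "e / 2"] by auto
    then have "closure T \<subseteq> (\<Union>p\<in>F. cball p (e / 2))"
      by (intro closure_minimal closed_UN) (auto dest!: subsetD)
    also have "\<dots> \<subseteq> (\<Union>p\<in>F. ball p e)"
      using \<open>e > 0\<close> by (intro UN_mono order_refl) auto
    finally show "\<exists>F. finite F \<and> closure T \<subseteq> (\<Union>p\<in>F. ball p e)"
      using F(1) by blast
  qed
qed

lemma compact_finite_family_convergent_subseq:
  fixes X :: "nat \<Rightarrow> 'i \<Rightarrow> 'a::metric_space"
  assumes "finite I" "compact K" "\<And>n c. c \<in> I \<Longrightarrow> X n c \<in> K"
  shows "\<exists>r y. strict_mono r \<and> (\<forall>c\<in>I. (\<lambda>n. X (r n) c) \<longlonglongrightarrow> y c)"
  using assms(1,3)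
proof (induction I rule: finite_induct)
  case empty
  show ?case using strict_mono_id by blast
next
  case (insert c I)
  then obtain r y where r: "strict_mono r" "\<forall>c\<in>I. (\<lambda>n. X (r n) c) \<longlonglongrightarrow> y c"
    by blast
  have "\<forall>n. X (r n) c \<in> K" using insert.prems by simp
  then obtain l r' where "l \<in> K" and r': "strict_mono r'" "((\<lambda>n. X (r n) c) \<circ> r') \<longlonglongrightarrow> l"
    by (rule seq_compactE[OF compact_imp_seq_compact[OF assms(2)]])
  have "(\<lambda>n. X ((r \<circ> r') n) b) \<longlonglongrightarrow> (y(c := l)) b" if "b \<in> insert c I" for b
  proof (cases "b = c")
    case True
    then show ?thesis using r'(2) by (simp add: o_def)
  next
    case False
    then have "((\<lambda>n. X (r n) b) \<circ> r') \<longlonglongrightarrow> y b"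
      using that r(2) r'(1) by (intro LIMSEQ_subseq_LIMSEQ) auto
    then show ?thesis using False by (simp add: o_def)
  qed
  then show ?case using strict_mono_o[OF r(1) r'(1)] by blast
qed

lemma delta_sum_limit:
  assumes \<phi>: "\<phi> \<in> Lip0_dual z"
    and approx: "(\<lambda>n. dual_dist z \<phi> (delta_sum z k lam (X n))) \<longlonglongrightarrow> 0"
    and conv: "\<And>i. i < k \<Longrightarrow> lam i \<noteq> 0 \<Longrightarrow> (\<lambda>n. X n i) \<longlonglongrightarrow> y i"
  shows "\<phi> = delta_sum z k lam y"
proof (rule Lip0_dual_eqI[OF \<phi> delta_sum_in_Lip0_dual])
  fix f assume f: "f \<in> Lip0 z"
  then obtain C where C: "lipschitz_on C UNIV f" unfolding Lip0_def by auto
  have "(\<lambda>n. lam i * f (X n i)) \<longlonglongrightarrow> lam i * f (y i)" if "i < k" for i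
  proof (cases "lam i = 0")
    case False
    then show ?thesis
      using conv[OF that False] lipschitz_on_continuous_on[OF C]
      by (intro tendsto_mult_left continuous_on_tendsto_compose[of UNIV f]) auto
  qed simp
  then have lim_y: "(\<lambda>n. delta_sum z k lam (X n) f) \<longlonglongrightarrow> delta_sum z k lam y f"
    unfolding delta_sum_apply[OF f] by (intro tendsto_sum) auto
  have lim_\<phi>: "(\<lambda>n. delta_sum z k lam (X n) f) \<longlonglongrightarrow> \<phi> f"
  proof (rule Lim_transform2[OF tendsto_const])
    have "norm (\<phi> f - delta_sum z k lam (X n) f) \<le> (C + 1) * dual_dist z \<phi> (delta_sum z k lam (X n))" for n
      unfolding dual_dist_def real_norm_def
      using abs_le_lipschitz_dual_norm[OF Lip0_dual_diff[OF \<phi> delta_sum_in_Lip0_dual] f C] .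
    moreover have "(\<lambda>n. (C + 1) * dual_dist z \<phi> (delta_sum z k lam (X n))) \<longlonglongrightarrow> 0"
      using tendsto_mult_right_zero[OF approx] .
    ultimately show "(\<lambda>n. \<phi> f - delta_sum z k lam (X n) f) \<longlonglongrightarrow> 0"
      by (rule Lim_null_comparison[OF always_eventually[OF allI]])
  qed
  show "\<phi> f = delta_sum z k lam y f" by (rule LIMSEQ_unique[OF lim_\<phi> lim_y])
qed

lemma separated_approx_by_delta_sums_imp_delta_sum:
  fixes z :: "'a::complete_space"
  assumes \<phi>: "\<phi> \<in> Lip0_dual z" and approx: "approx_by_delta_sums z k lam \<phi>" and "\<delta> > 0"
    and separated: "\<And>x i j. dual_dist z \<phi> (delta_sum z k lam x) < \<delta> \<Longrightarrow> i < k \<Longrightarrow> j < k \<Longrightarrow>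
      i \<noteq> j \<Longrightarrow> lam i \<noteq> 0 \<Longrightarrow> lam j \<noteq> 0 \<Longrightarrow> \<delta> \<le> dist (x i) (x j)"
  shows "\<exists>y. \<phi> = delta_sum z k lam y"
proof -
  have "\<forall>n. \<exists>x. dual_dist z \<phi> (delta_sum z k lam x) < inverse (Suc n)"
    using approx unfolding approx_by_delta_sums_def by simp
  then obtain X where X: "\<And>n. dual_dist z \<phi> (delta_sum z k lam (X n)) < inverse (Suc n)"
    by metis
  have X0: "(\<lambda>n. dual_dist z \<phi> (delta_sum z k lam (X n))) \<longlonglongrightarrow> 0"
  proof (rule tendsto_sandwich[OF _ _ tendsto_const LIMSEQ_inverse_real_of_nat])
    show "\<forall>\<^sub>F n in sequentially. 0 \<le> dual_dist z \<phi> (delta_sum z k lam (X n))"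
      using dual_dist_nonneg[OF \<phi> delta_sum_in_Lip0_dual] by simp
    show "\<forall>\<^sub>F n in sequentially. dual_dist z \<phi> (delta_sum z k lam (X n)) \<le> inverse (Suc n)"
      using X by (simp add: less_imp_le)
  qed
  define T where "T = {X n c |n c. c < k \<and> lam c \<noteq> 0}"
  have "compact (closure T)"
  proof (rule compact_closure_if_finite_ball_covers)
    fix e :: real assume "e > 0"
    show "\<exists>F. finite F \<and> T \<subseteq> (\<Union>p\<in>F. ball p e)"
      unfolding T_def using separated_approximants_finite_cover[OF \<phi> \<open>\<delta> > 0\<close> separated X0 \<open>e > 0\<close>] .
  qed
  moreover have "X n c \<in> closure T" if "c \<in> {c. c < k \<and> lam c \<noteq> 0}" for n c
  proof -
    have "X n c \<in> T" using that unfolding T_def by blast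
    then show ?thesis using closure_subset by blast
  qed
  ultimately obtain r y where r: "strict_mono r"
    and conv: "\<forall>c\<in>{c. c < k \<and> lam c \<noteq> 0}. (\<lambda>n. X (r n) c) \<longlonglongrightarrow> y c"
    using compact_finite_family_convergent_subseq[of "{c. c < k \<and> lam c \<noteq> 0}" "closure T" X] by auto
  have "(\<lambda>n. dual_dist z \<phi> (delta_sum z k lam (X (r n)))) \<longlonglongrightarrow> 0"
    using LIMSEQ_subseq_LIMSEQ[OF X0 r] by (simp add: o_def)
  then have "\<phi> = delta_sum z k lam y"
    by (rule delta_sum_limit[OF \<phi>]) (use conv in simp)
  then show ?thesis by blast
qed

lemma approx_by_delta_sums_imp_delta_sum:
  fixes z :: "'a::complete_space"
  assumes "\<phi> \<in> Lip0_dual z" "approx_by_delta_sums z k lam \<phi>"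
  shows "\<exists>y. \<phi> = delta_sum z k lam y"
  using assms(2)
proof (induction "card {i. i < k \<and> lam i \<noteq> 0}" arbitrary: lam rule: less_induct)
  case less
  show ?case
  proof (cases rule: mergeable_or_separated[of k lam z \<phi>])
    case (mergeable i j)
    define lam' where "lam' = lam(i := lam i + lam j, j := 0)"
    have "{l. l < k \<and> lam' l \<noteq> 0} \<subseteq> {l. l < k \<and> lam l \<noteq> 0} - {j}"
      unfolding lam'_def using mergeable by auto
    then have "card {l. l < k \<and> lam' l \<noteq> 0} \<le> card ({l. l < k \<and> lam l \<noteq> 0} - {j})"
      by (intro card_mono) auto
    also have "\<dots> < card {l. l < k \<and> lam l \<noteq> 0}"
      using mergeable by (intro card_Diff1_less) auto
    finally have "card {l. l < k \<and> lam' l \<noteq> 0} < card {l. l < k \<and> lam l \<noteq> 0}" .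
    moreover have "approx_by_delta_sums z k lam' \<phi>"
      unfolding lam'_def using approx_by_delta_sums_merge[OF assms(1)] mergeable by blast
    ultimately obtain y where "\<phi> = delta_sum z k lam' y"
      using less.hyps by blast
    also have "\<dots> = delta_sum z k lam' (y(j := y i))"
      by (rule delta_sum_cong) (auto simp: lam'_def)
    also have "\<dots> = delta_sum z k lam (y(j := y i))"
      unfolding lam'_def using mergeable by (intro delta_sum_merge_coincident) auto
    finally show ?thesis by blast
  next
    case (separated \<delta>)
    then show ?thesis
      by (intro separated_approx_by_delta_sums_imp_delta_sum[OF assms(1) less.prems]) auto
  qed
qed

theorem lemma3p16:
  fixes z :: "'a::complete_space" and k :: nat and lam :: "nat \<Rightarrow> real"
  defines "S \<equiv> {(\<lambda>f. \<Sum>i<k. lam i * delta z (x i) f) | x :: nat \<Rightarrow> 'a. True}"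
  shows "S \<subseteq> free_space z \<and>
         (\<forall>\<phi>\<in>free_space z. (\<forall>e>0. \<exists>s\<in>S. dual_norm z (\<lambda>f. \<phi> f - s f) < e) \<longrightarrow> \<phi> \<in> S)"
proof
  have S: "S = range (delta_sum z k lam)"
    unfolding S_def delta_sum_def by auto
  show "S \<subseteq> free_space z"
    unfolding S using delta_sum_in_free_space by blast
  show "\<forall>\<phi>\<in>free_space z. (\<forall>e>0. \<exists>s\<in>S. dual_norm z (\<lambda>f. \<phi> f - s f) < e) \<longrightarrow> \<phi> \<in> S"
  proof (intro ballI impI)
    fix \<phi> assume "\<phi> \<in> free_space z" and "\<forall>e>0. \<exists>s\<in>S. dual_norm z (\<lambda>f. \<phi> f - s f) < e"
    then have "\<phi> \<in> Lip0_dual z" and "approx_by_delta_sums z k lam \<phi>"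
      unfolding free_space_def approx_by_delta_sums_def dual_dist_def S by auto
    then show "\<phi> \<in> S"
      unfolding S using approx_by_delta_sums_imp_delta_sum by blast
  qed
qed

end
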